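(* Let $a\in\mathbb F^*$ and $g,h\in\mathcal R$ with $x^n-a=hg$, let $k=\deg(h)$ and $c=\gamma(a,g)$. Define $\widehat h^{l}=\rho_l(\theta^{-n}(h))$ and $\widehat g^{r}=\rho_r(\theta^n(g))$. Then (a) $g\,a^{-1}h=c^{-1}(x^n-c)$; (b) $-\theta^{k-n}(c^{-1})\,\theta^k(c^{-1})\,\widehat h^{l}\,a\,\widehat g^{r}=x^n-\theta^k(c^{-1})$; (c) $-\widehat g^{r}\,\theta^{k-n}(c^{-1})\,\widehat h^{l}=x^n-a^{-1}$.
   Context: $\mathbb F$ is a finite field, $\theta\in\mathrm{Aut}(\mathbb F)$, $\mathcal R=\mathbb F[x;\theta]$ the skew polynomial ring (elements $\sum f_ix^i$ with left coefficients, $xb=\theta(b)x$), $n\in\mathbb N$. Integer powers of $\theta$ act on $\mathcal R$ coefficientwise. For a right divisor $g=\sum g_ix^i$ of $x^n-a$, $\gamma(a,g)=a\,g_0^{-1}\theta^n(g_0)$. For nonzero $f=\sum_{i=0}^tf_ix^i$ with $f_t\neq0$, $\rho_l(f)=\sum_{i=0}^t\theta^i(f_{t-i})x^i$ and $\rho_r(f)=\sum_{i=0}^t\theta^{i-t}(f_{t-i})x^i$. *)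

theory Defs
  imports "HOL-Computational_Algebra.Polynomial"
begin

text \<open>Skew polynomial ring F[x;theta] represented on the carrier type 'a poly:
  a polynomial with coefficients f_i stands for sum f_i x^i (left coefficients);
  addition is the usual one, multiplication is the skew product x b = theta(b) x.\<close>

definition field_aut :: "('a::field \<Rightarrow> 'a) \<Rightarrow> bool" where
  "field_aut \<theta> \<longleftrightarrow> bij \<theta> \<and> (\<forall>x y. \<theta> (x + y) = \<theta> x + \<theta> y)
      \<and> (\<forall>x y. \<theta> (x * y) = \<theta> x * \<theta> y) \<and> \<theta> 1 = 1"

definition theta_pow :: "('a \<Rightarrow> 'a) \<Rightarrow> int \<Rightarrow> 'a \<Rightarrow> 'a" where
  "theta_pow \<theta> m = (if 0 \<le> m then \<theta> ^^ nat m else (inv \<theta>) ^^ nat (- m))"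

definition skew_mult :: "('a::comm_ring_1 \<Rightarrow> 'a) \<Rightarrow> 'a poly \<Rightarrow> 'a poly \<Rightarrow> 'a poly" where
  "skew_mult \<theta> f g =
     (\<Sum>i\<le>degree f. \<Sum>j\<le>degree g. monom (coeff f i * (\<theta> ^^ i) (coeff g j)) (i + j))"

definition gamma :: "('a::field \<Rightarrow> 'a) \<Rightarrow> nat \<Rightarrow> 'a \<Rightarrow> 'a poly \<Rightarrow> 'a" where
  "gamma \<theta> n a g = a * inverse (coeff g 0) * (\<theta> ^^ n) (coeff g 0)"

definition rho_l :: "('a::field \<Rightarrow> 'a) \<Rightarrow> 'a poly \<Rightarrow> 'a poly" where
  "rho_l \<theta> f = (\<Sum>i\<le>degree f. monom ((\<theta> ^^ i) (coeff f (degree f - i))) i)"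

definition rho_r :: "('a::field \<Rightarrow> 'a) \<Rightarrow> 'a poly \<Rightarrow> 'a poly" where
  "rho_r \<theta> f = (\<Sum>i\<le>degree f.
      monom (theta_pow \<theta> (int i - int (degree f)) (coeff f (degree f - i))) i)"

end

theory Submission
  imports Defs
begin

(* Comparing (h g) g = (x^n - a) g with \<theta>^n(g) (h g) = \<theta>^n(g) (x^n - a), using
   x^n g = \<theta>^n(g) x^n, shows that w = h g - \<theta>^n(g) h satisfies w g = \<theta>^n(g) a - a g.
   The right-hand side has degree at most deg g, so w is a constant, and comparing constant terms
   gives \<theta>^n(g) a = \<gamma>(a,g) g.  Part (a) then follows by cancelling g on the right.
   For (b) and (c), reflections turn products into products in the reverse order (twisted by
   powers of \<theta>), which reduces them to (x^n - a) a^-1 = h g a^-1 and to the identity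
   g \<theta>^-n(h) = x^n - \<theta>^-n(\<gamma>) obtained from (a). *)

lemma degree_monom_one_minus_const:
  "0 < n \<Longrightarrow> degree (monom 1 n - [:b::'a::comm_ring_1:]) = n"
  using degree_add_eq_left[of "- [:b:]" "monom 1 n"]
  by (simp add: degree_monom_eq diff_conv_add_uminus)

locale skew_poly_ring =
  fixes \<theta> :: "'a::field \<Rightarrow> 'a"
  assumes aut: "field_aut \<theta>"
begin

abbreviation \<Theta> :: "int \<Rightarrow> 'a \<Rightarrow> 'a" where "\<Theta> \<equiv> theta_pow \<theta>"

abbreviation skew_times :: "'a poly \<Rightarrow> 'a poly \<Rightarrow> 'a poly" (infixl \<open>\<star>\<close> 70)
  where "f \<star> g \<equiv> skew_mult \<theta> f g"

lemma theta_add: "\<theta> (x + y) = \<theta> x + \<theta> y"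
  and theta_mult: "\<theta> (x * y) = \<theta> x * \<theta> y"
  and theta_one: "\<theta> 1 = 1"
  and bij_theta: "bij \<theta>"
  using aut by (auto simp: field_aut_def)

lemma inv_theta_theta [simp]: "inv \<theta> (\<theta> x) = x"
  by (simp add: bij_theta bij_is_inj)

lemma theta_inv_theta [simp]: "\<theta> (inv \<theta> x) = x"
  by (simp add: bij_theta bij_is_surj surj_f_inv_f)

section \<open>Integer powers of the automorphism\<close>

lemma funpow_theta_eq_theta_pow: "\<theta> ^^ i = \<Theta> (int i)"
  by (simp add: theta_pow_def)

lemma theta_pow_0 [simp]: "\<Theta> 0 x = x"
  by (simp add: theta_pow_def)

lemma theta_pow_succ: "\<Theta> (p + 1) x = \<theta> (\<Theta> p x)"
proof (cases "0 \<le> p")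
  case True
  then have "nat (p + 1) = Suc (nat p)" by simp
  with True show ?thesis by (simp add: theta_pow_def)
next
  case False
  then obtain q where q: "nat (- p) = Suc q"
    by (metis gr0_implies_Suc leI nat_0_iff neg_0_less_iff_less zero_less_nat_eq)
  then have "nat (- (p + 1)) = q" by simp
  with False q show ?thesis by (auto simp: theta_pow_def)
qed

lemma theta_pow_pred: "\<Theta> (p - 1) x = inv \<theta> (\<Theta> p x)"
  using theta_pow_succ[of "p - 1"] by simp

lemma theta_pow_add: "\<Theta> (p + q) x = \<Theta> p (\<Theta> q x)"
proof (induction p rule: int_induct[where k = 0])
  case (step1 i)
  then show ?case by (metis add.assoc add.commute theta_pow_succ)
next
  case (step2 i)
  then show ?case by (metis add_diff_eq diff_add_eq theta_pow_pred)
qed simp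

lemma theta_pow_hom:
  "\<Theta> p (x + y) = \<Theta> p x + \<Theta> p y \<and> \<Theta> p (x * y) = \<Theta> p x * \<Theta> p y \<and> \<Theta> p 1 = 1"
proof (induction p rule: int_induct[where k = 0])
  case (step1 i)
  then show ?case by (simp add: theta_pow_succ theta_add theta_mult theta_one)
next
  case (step2 i)
  have "inv \<theta> (u + v) = inv \<theta> u + inv \<theta> v" "inv \<theta> (u * v) = inv \<theta> u * inv \<theta> v"
    "inv \<theta> 1 = 1" for u v
    by (metis theta_add theta_mult theta_one inv_theta_theta theta_inv_theta)+
  with step2 show ?case by (simp add: theta_pow_pred)
qed simp

lemma theta_pow_plus: "\<Theta> p (x + y) = \<Theta> p x + \<Theta> p y"
  and theta_pow_times: "\<Theta> p (x * y) = \<Theta> p x * \<Theta> p y"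
  and theta_pow_one [simp]: "\<Theta> p 1 = 1"
  using theta_pow_hom by blast+

lemma theta_pow_uminus_cancel [simp]: "\<Theta> (- p) (\<Theta> p x) = x"
  by (metis add.left_inverse theta_pow_0 theta_pow_add)

lemma theta_pow_eq_iff [simp]: "\<Theta> p x = \<Theta> p y \<longleftrightarrow> x = y"
  by (metis theta_pow_uminus_cancel)

lemma theta_pow_zero [simp]: "\<Theta> p 0 = 0"
  by (metis add_cancel_right_right theta_pow_plus)

lemma theta_pow_eq_0_iff [simp]: "\<Theta> p x = 0 \<longleftrightarrow> x = 0"
  by (metis theta_pow_eq_iff theta_pow_zero)

lemma theta_pow_uminus: "\<Theta> p (- x) = - \<Theta> p x"
  by (metis add.right_inverse add_eq_0_iff theta_pow_plus theta_pow_zero)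

lemma theta_pow_diff: "\<Theta> p (x - y) = \<Theta> p x - \<Theta> p y"
  using theta_pow_plus[of p x "- y"] by (simp add: theta_pow_uminus)

lemma theta_pow_inverse: "\<Theta> p (inverse x) = inverse (\<Theta> p x)"
proof (cases "x = 0")
  case False
  then have "\<Theta> p x * \<Theta> p (inverse x) = 1" by (simp flip: theta_pow_times)
  then show ?thesis by (simp add: inverse_unique)
qed simp

lemma theta_pow_sum: "\<Theta> p (sum f A) = (\<Sum>x\<in>A. \<Theta> p (f x))"
  by (induction A rule: infinite_finite_induct) (auto simp: theta_pow_plus)

section \<open>Skew multiplication\<close>

lemma coeff_skew_mult:
  "coeff (f \<star> g) s = (\<Sum>i\<le>s. coeff f i * \<Theta> (int i) (coeff g (s - i)))"
proof -
  have inner: "(\<Sum>j\<le>degree g. coeff (monom (coeff f i * \<Theta> (int i) (coeff g j)) (i + j)) s)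
      = (if i \<le> s then coeff f i * \<Theta> (int i) (coeff g (s - i)) else 0)" for i
  proof (cases "i \<le> s \<and> s - i \<le> degree g")
    case True
    then have "(\<Sum>j\<le>degree g. coeff (monom (coeff f i * \<Theta> (int i) (coeff g j)) (i + j)) s)
        = (\<Sum>j\<le>degree g. if j = s - i then coeff f i * \<Theta> (int i) (coeff g j) else 0)"
      by (intro sum.cong) (auto simp: coeff_monom)
    with True show ?thesis by simp
  next
    case False
    then show ?thesis
      by (auto simp: coeff_monom coeff_eq_0 intro!: sum.neutral)
  qed
  have "coeff (f \<star> g) s
      = (\<Sum>i\<le>degree f. if i \<le> s then coeff f i * \<Theta> (int i) (coeff g (s - i)) else 0)"
    by (simp only: skew_mult_def coeff_sum inner funpow_theta_eq_theta_pow)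
  also have "\<dots> = (\<Sum>i\<le>s. coeff f i * \<Theta> (int i) (coeff g (s - i)))"
    by (rule sum.mono_neutral_cong) (auto simp: coeff_eq_0)
  finally show ?thesis .
qed

lemma skew_mult_add_left: "(f + g) \<star> h = f \<star> h + g \<star> h"
  by (rule poly_eqI) (simp add: coeff_skew_mult distrib_right sum.distrib)

lemma skew_mult_add_right: "f \<star> (g + h) = f \<star> g + f \<star> h"
  by (rule poly_eqI) (simp add: coeff_skew_mult theta_pow_plus distrib_left sum.distrib)

lemma skew_mult_0_left [simp]: "0 \<star> f = 0"
  and skew_mult_0_right [simp]: "f \<star> 0 = 0"
  by (simp_all add: poly_eq_iff coeff_skew_mult)

lemma skew_mult_minus_left: "(- f) \<star> g = - (f \<star> g)"
  by (rule poly_eqI) (simp add: coeff_skew_mult sum_negf)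

lemma skew_mult_minus_right: "f \<star> (- g) = - (f \<star> g)"
  by (rule poly_eqI) (simp add: coeff_skew_mult theta_pow_uminus sum_negf)

lemma skew_mult_diff_left: "(f - g) \<star> h = f \<star> h - g \<star> h"
  using skew_mult_add_left[of f "- g" h] by (simp add: skew_mult_minus_left)

lemma skew_mult_diff_right: "f \<star> (g - h) = f \<star> g - f \<star> h"
  using skew_mult_add_right[of f g "- h"] by (simp add: skew_mult_minus_right)

lemma skew_mult_sum_left: "sum F A \<star> g = (\<Sum>x\<in>A. F x \<star> g)"
  by (induction A rule: infinite_finite_induct) (auto simp: skew_mult_add_left)

lemma skew_mult_sum_right: "f \<star> sum G A = (\<Sum>x\<in>A. f \<star> G x)"
  by (induction A rule: infinite_finite_induct) (auto simp: skew_mult_add_right)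

lemma coeff_monom_skew_mult:
  "coeff (monom b n \<star> f) m = (if n \<le> m then b * \<Theta> (int n) (coeff f (m - n)) else 0)"
proof -
  have "coeff (monom b n \<star> f) m
      = (\<Sum>i\<le>m. if i = n then b * \<Theta> (int i) (coeff f (m - i)) else 0)"
    unfolding coeff_skew_mult by (intro sum.cong) (auto simp: coeff_monom)
  then show ?thesis by simp
qed

lemma coeff_skew_mult_monom:
  "coeff (f \<star> monom b n) m = (if n \<le> m then coeff f (m - n) * \<Theta> (int (m - n)) b else 0)"
proof -
  have "coeff (f \<star> monom b n) m
      = (\<Sum>i\<le>m. if i = m - n then (if n \<le> m then coeff f i * \<Theta> (int i) b else 0) else 0)"
    unfolding coeff_skew_mult by (intro sum.cong) (auto simp: coeff_monom)
  then show ?thesis by simp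
qed

lemma skew_mult_monom: "monom a i \<star> monom b j = monom (a * \<Theta> (int i) b) (i + j)"
  by (rule poly_eqI) (auto simp: coeff_monom_skew_mult coeff_monom)

lemma skew_mult_assoc: "(f \<star> g) \<star> h = f \<star> (g \<star> h)"
proof -
  have monoms: "(monom a i \<star> monom b j) \<star> monom d l = monom a i \<star> (monom b j \<star> monom d l)"
    for a b d i j l
    by (simp add: skew_mult_monom theta_pow_times mult.assoc add.assoc flip: theta_pow_add)
  define F G H where "F = (\<Sum>i\<le>degree f. monom (coeff f i) i)"
    and "G = (\<Sum>i\<le>degree g. monom (coeff g i) i)" and "H = (\<Sum>i\<le>degree h. monom (coeff h i) i)"
  have "(F \<star> G) \<star> H = F \<star> (G \<star> H)"
    unfolding F_def G_def H_def by (simp only: skew_mult_sum_left skew_mult_sum_right monoms)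
  then show ?thesis by (simp add: F_def G_def H_def poly_as_sum_of_monoms)
qed

lemma skew_mult_const_left: "[:c:] \<star> f = smult c f"
  by (rule poly_eqI) (simp add: coeff_monom_skew_mult flip: monom_0)

lemma coeff_skew_mult_const_right: "coeff (f \<star> [:c:]) m = coeff f m * \<Theta> (int m) c"
  by (simp add: coeff_skew_mult_monom flip: monom_0)

lemma skew_mult_const: "[:b:] \<star> [:c:] = [:b * c:]"
  by (simp add: skew_mult_const_left)

lemma skew_mult_one_right [simp]: "f \<star> 1 = f"
  by (rule poly_eqI) (simp add: coeff_skew_mult_const_right flip: pCons_one)

lemma monom_skew_mult_const: "monom b n \<star> [:c:] = monom (b * \<Theta> (int n) c) n"
  by (simp add: skew_mult_monom flip: monom_0)

lemma smult_skew_mult: "smult c f \<star> g = smult c (f \<star> g)"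
  by (metis skew_mult_assoc skew_mult_const_left)

lemma monom_skew_mult_commute: "monom 1 n \<star> f = map_poly (\<Theta> (int n)) f \<star> monom 1 n"
  by (rule poly_eqI) (simp add: coeff_monom_skew_mult coeff_skew_mult_monom coeff_map_poly)

lemma coeff_skew_mult_eq_0:
  assumes "degree f + degree g < m"
  shows "coeff (f \<star> g) m = 0"
  unfolding coeff_skew_mult using assms
  by (intro sum.neutral) (auto simp: coeff_eq_0 dest!: le_degree)

lemma coeff_skew_mult_degree:
  "coeff (f \<star> g) (degree f + degree g) = lead_coeff f * \<Theta> (int (degree f)) (lead_coeff g)"
proof -
  have "coeff f i * \<Theta> (int i) (coeff g (degree f + degree g - i)) = 0" if "i \<noteq> degree f" for i
    using that by (cases "i < degree f") (auto simp: coeff_eq_0)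
  then have "coeff (f \<star> g) (degree f + degree g)
      = (\<Sum>i\<le>degree f + degree g.
          if i = degree f then lead_coeff f * \<Theta> (int i) (lead_coeff g) else 0)"
    unfolding coeff_skew_mult by (intro sum.cong) auto
  then show ?thesis by simp
qed

lemma degree_skew_mult_le: "degree (f \<star> g) \<le> degree f + degree g"
  by (rule degree_le) (auto intro: coeff_skew_mult_eq_0)

lemma degree_skew_mult:
  assumes "f \<noteq> 0" "g \<noteq> 0"
  shows "degree (f \<star> g) = degree f + degree g"
proof (rule antisym)
  show "degree (f \<star> g) \<le> degree f + degree g"
    by (rule degree_skew_mult_le)
  show "degree f + degree g \<le> degree (f \<star> g)"
    using assms by (intro le_degree) (simp add: coeff_skew_mult_degree)
qed

lemma skew_mult_eq_0_iff: "f \<star> g = 0 \<longleftrightarrow> f = 0 \<or> g = 0"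
  by (metis coeff_0 coeff_skew_mult_degree leading_coeff_0_iff mult_eq_0_iff
      skew_mult_0_left skew_mult_0_right theta_pow_eq_0_iff)

lemma skew_mult_right_cancel:
  assumes "g \<noteq> 0"
  shows "f \<star> g = f' \<star> g \<longleftrightarrow> f = f'"
  using assms skew_mult_eq_0_iff[of "f - f'" g] by (auto simp: skew_mult_diff_left)

lemma coeff_map_theta_pow [simp]: "coeff (map_poly (\<Theta> p) f) i = \<Theta> p (coeff f i)"
  by (simp add: coeff_map_poly)

lemma degree_map_theta_pow [simp]: "degree (map_poly (\<Theta> p) f) = degree f"
  by (simp add: degree_map_poly)

lemma theta_pow_commute: "\<Theta> p (\<Theta> q x) = \<Theta> q (\<Theta> p x)"
  by (metis add.commute theta_pow_add)

lemma map_theta_pow_skew_mult: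
  "map_poly (\<Theta> p) (f \<star> g) = map_poly (\<Theta> p) f \<star> map_poly (\<Theta> p) g"
  by (rule poly_eqI)
    (simp add: coeff_skew_mult theta_pow_sum theta_pow_times theta_pow_commute[of p])

lemma map_theta_pow_map_theta_pow [simp]:
  "map_poly (\<Theta> p) (map_poly (\<Theta> q) f) = map_poly (\<Theta> (p + q)) f"
  by (rule poly_eqI) (simp add: theta_pow_add)

lemma map_theta_pow_0 [simp]: "map_poly (\<Theta> 0) f = f"
  by (rule poly_eqI) simp

lemma map_theta_pow_const [simp]: "map_poly (\<Theta> p) [:c:] = [:\<Theta> p c:]"
  by (simp add: map_poly_pCons)

lemma map_theta_pow_binomial:
  "map_poly (\<Theta> p) (monom b n - [:d:]) = monom (\<Theta> p b) n - [:\<Theta> p d:]"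
  by (rule poly_eqI) (simp add: coeff_monom theta_pow_diff coeff_pCons split: nat.split)

section \<open>Reflections\<close>

text \<open>In the skew Laurent ring, \<open>reflect_l D f = x^D \<phi>(f)\<close> and \<open>reflect_r D f = \<phi>(f) x^D\<close>
  for the anti-automorphism \<open>\<phi>(\<Sum> f_i x^i) = \<Sum> x^-i f_i\<close>; the product rules below come from
  \<open>\<phi>(p q) = \<phi>(q) \<phi>(p)\<close> and \<open>x^N \<phi>(q) = \<phi>(\<theta>^N q) x^N\<close>.\<close>

definition reflect_l :: "nat \<Rightarrow> 'a poly \<Rightarrow> 'a poly" where
  "reflect_l D f = (\<Sum>i\<le>D. monom (\<Theta> (int i) (coeff f (D - i))) i)"

definition reflect_r :: "nat \<Rightarrow> 'a poly \<Rightarrow> 'a poly" where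
  "reflect_r D f = (\<Sum>i\<le>D. monom (\<Theta> (int i - int D) (coeff f (D - i))) i)"

lemma rho_l_eq_reflect_l: "rho_l \<theta> f = reflect_l (degree f) f"
  by (simp add: rho_l_def reflect_l_def funpow_theta_eq_theta_pow)

lemma rho_r_eq_reflect_r: "rho_r \<theta> f = reflect_r (degree f) f"
  by (simp add: rho_r_def reflect_r_def)

lemma coeff_reflect_l:
  "coeff (reflect_l D f) i = (if i \<le> D then \<Theta> (int i) (coeff f (D - i)) else 0)"
  by (simp add: reflect_l_def coeff_sum coeff_monom)

lemma coeff_reflect_r:
  "coeff (reflect_r D f) i = (if i \<le> D then \<Theta> (int i - int D) (coeff f (D - i)) else 0)"
  by (simp add: reflect_r_def coeff_sum coeff_monom)

lemma reflect_l_add: "reflect_l D (f + g) = reflect_l D f + reflect_l D g"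
  by (rule poly_eqI) (simp add: coeff_reflect_l theta_pow_plus)

lemma reflect_r_add: "reflect_r D (f + g) = reflect_r D f + reflect_r D g"
  by (rule poly_eqI) (simp add: coeff_reflect_r theta_pow_plus)

lemma reflect_l_diff: "reflect_l D (f - g) = reflect_l D f - reflect_l D g"
  by (rule poly_eqI) (simp add: coeff_reflect_l theta_pow_diff)

lemma reflect_r_diff: "reflect_r D (f - g) = reflect_r D f - reflect_r D g"
  by (rule poly_eqI) (simp add: coeff_reflect_r theta_pow_diff)

lemma reflect_l_0 [simp]: "reflect_l D 0 = 0"
  by (simp add: reflect_l_def)

lemma reflect_r_0 [simp]: "reflect_r D 0 = 0"
  by (simp add: reflect_r_def)

lemma reflect_l_sum: "reflect_l D (sum F A) = (\<Sum>x\<in>A. reflect_l D (F x))"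
  by (induction A rule: infinite_finite_induct) (auto simp: reflect_l_add)

lemma reflect_r_sum: "reflect_r D (sum F A) = (\<Sum>x\<in>A. reflect_r D (F x))"
  by (induction A rule: infinite_finite_induct) (auto simp: reflect_r_add)

lemma reflect_l_monom:
  "j \<le> D \<Longrightarrow> reflect_l D (monom b j) = monom (\<Theta> (int (D - j)) b) (D - j)"
  by (rule poly_eqI) (auto simp: coeff_reflect_l coeff_monom)

lemma reflect_r_monom:
  "j \<le> D \<Longrightarrow> reflect_r D (monom b j) = monom (\<Theta> (- int j) b) (D - j)"
  by (rule poly_eqI) (auto simp: coeff_reflect_r coeff_monom)

lemma reflect_l_const [simp]: "reflect_l 0 [:c:] = [:c:]"
  using reflect_l_monom[of 0 0 c] by (simp add: monom_0)

lemma reflect_r_const [simp]: "reflect_r 0 [:c:] = [:c:]"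
  using reflect_r_monom[of 0 0 c] by (simp add: monom_0)

lemma reflect_l_binomial: "reflect_l D (monom b D - [:d:]) = [:b:] - monom (\<Theta> (int D) d) D"
  using reflect_l_monom[of D D b] reflect_l_monom[of 0 D d] by (simp add: reflect_l_diff monom_0)

lemma reflect_r_binomial: "reflect_r D (monom b D - [:d:]) = [:\<Theta> (- int D) b:] - monom d D"
  using reflect_r_monom[of D D b] reflect_r_monom[of 0 D d] by (simp add: reflect_r_diff monom_0)

lemma reflect_r_skew_mult_reflect_l:
  assumes "degree p \<le> P" "degree q \<le> Q"
  shows "reflect_r P p \<star> reflect_l Q q = reflect_r (P + Q) (map_poly (\<Theta> (int (P + Q))) q \<star> p)"
proof -
  have monoms: "reflect_r P (monom b j) \<star> reflect_l Q (monom d l)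
      = reflect_r (P + Q) (monom (\<Theta> (int (P + Q)) d) l \<star> monom b j)"
    if "j \<le> P" "l \<le> Q" for b d j l
  proof -
    have "P - j + (Q - l) = P + Q - (l + j)"
      using that by auto
    with that show ?thesis
      by (simp add: reflect_r_monom reflect_l_monom skew_mult_monom theta_pow_times mult.commute
          flip: theta_pow_add) (simp add: algebra_simps)
  qed
  let ?map = "map_poly (\<Theta> (int (P + Q)))"
  have "reflect_r P (\<Sum>j\<le>P. monom (coeff p j) j) \<star> reflect_l Q (\<Sum>l\<le>Q. monom (coeff q l) l)
      = (\<Sum>j\<le>P. \<Sum>l\<le>Q. reflect_r P (monom (coeff p j) j) \<star> reflect_l Q (monom (coeff q l) l))"
    by (simp only: reflect_r_sum reflect_l_sum skew_mult_sum_left skew_mult_sum_right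
        sum.swap[of _ "{..Q}"])
  also have "\<dots> = (\<Sum>j\<le>P. \<Sum>l\<le>Q.
      reflect_r (P + Q) (monom (coeff (?map q) l) l \<star> monom (coeff p j) j))"
    by (intro sum.cong refl) (simp add: monoms)
  also have "\<dots> = reflect_r (P + Q)
      ((\<Sum>l\<le>Q. monom (coeff (?map q) l) l) \<star> (\<Sum>j\<le>P. monom (coeff p j) j))"
    by (simp only: reflect_r_sum skew_mult_sum_left skew_mult_sum_right sum.swap[of _ "{..P}"])
  finally show ?thesis
    using assms by (simp only: poly_as_sum_of_monoms' degree_map_theta_pow)
qed

lemma reflect_l_skew_mult_reflect_r:
  assumes "degree q \<le> Q" "degree p \<le> P"
  shows "reflect_l Q q \<star> reflect_r P p = reflect_l (Q + P) (map_poly (\<Theta> (- int P)) (p \<star> q))"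
proof -
  have monoms: "reflect_l Q (monom d l) \<star> reflect_r P (monom b j)
      = reflect_l (Q + P) (monom (\<Theta> (- int P) b) j \<star> monom (\<Theta> (- int P) d) l)"
    if "j \<le> P" "l \<le> Q" for b d j l
  proof -
    have "Q - l + (P - j) = Q + P - (j + l)"
      using that by auto
    with that show ?thesis
      by (simp add: reflect_r_monom reflect_l_monom skew_mult_monom theta_pow_times mult.commute
          flip: theta_pow_add) (simp add: algebra_simps)
  qed
  let ?map = "map_poly (\<Theta> (- int P))"
  have "reflect_l Q (\<Sum>l\<le>Q. monom (coeff q l) l) \<star> reflect_r P (\<Sum>j\<le>P. monom (coeff p j) j)
      = (\<Sum>l\<le>Q. \<Sum>j\<le>P. reflect_l Q (monom (coeff q l) l) \<star> reflect_r P (monom (coeff p j) j))"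
    by (simp only: reflect_r_sum reflect_l_sum skew_mult_sum_left skew_mult_sum_right
        sum.swap[of _ "{..P}"])
  also have "\<dots> = (\<Sum>l\<le>Q. \<Sum>j\<le>P.
      reflect_l (Q + P) (monom (coeff (?map p) j) j \<star> monom (coeff (?map q) l) l))"
    by (intro sum.cong refl) (simp add: monoms)
  also have "\<dots> = reflect_l (Q + P)
      ((\<Sum>j\<le>P. monom (coeff (?map p) j) j) \<star> (\<Sum>l\<le>Q. monom (coeff (?map q) l) l))"
    by (simp only: reflect_l_sum skew_mult_sum_left skew_mult_sum_right sum.swap[of _ "{..Q}"])
  finally show ?thesis
    using assms by (simp only: poly_as_sum_of_monoms' degree_map_theta_pow map_theta_pow_skew_mult)
qed

end

section \<open>Factorizations of \<open>x\<^sup>n - a\<close>\<close>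

locale skew_binomial_factorization = skew_poly_ring +
  fixes a :: 'a and g h :: "'a poly" and n :: nat
  assumes a_nonzero: "a \<noteq> 0"
    and n_pos: "0 < n"
    and factorization: "monom 1 n - [:a:] = h \<star> g"
begin

abbreviation \<gamma> :: 'a where "\<gamma> \<equiv> gamma \<theta> n a g"

abbreviation twisted_g :: "'a poly" where "twisted_g \<equiv> map_poly (\<Theta> (int n)) g"

lemma factors_nonzero: "h \<noteq> 0" "g \<noteq> 0"
  using degree_monom_one_minus_const[OF n_pos, of a] n_pos factorization by auto

lemma degree_factors: "degree h + degree g = n"
  using degree_skew_mult[OF factors_nonzero] degree_monom_one_minus_const[OF n_pos, of a]
  by (simp add: factorization)

lemma coeff_0_g_nonzero: "coeff g 0 \<noteq> 0"
proof -
  have "coeff (h \<star> g) 0 = - a"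
    using n_pos by (simp flip: factorization)
  then show ?thesis
    using a_nonzero by (auto simp: coeff_skew_mult)
qed

lemma gamma_nonzero: "\<gamma> \<noteq> 0"
  using a_nonzero coeff_0_g_nonzero
  by (simp add: gamma_def funpow_theta_eq_theta_pow)

lemma twisted_g_mult_a: "twisted_g \<star> [:a:] = smult \<gamma> g"
proof -
  define w where "w = h \<star> g - twisted_g \<star> h"
  have "(h \<star> g) \<star> g = twisted_g \<star> monom 1 n - smult a g"
    by (simp add: monom_skew_mult_commute skew_mult_const_left skew_mult_diff_left
        flip: factorization)
  moreover have "(twisted_g \<star> h) \<star> g = twisted_g \<star> monom 1 n - twisted_g \<star> [:a:]"
    by (simp add: skew_mult_assoc skew_mult_diff_right flip: factorization)
  ultimately have wg: "w \<star> g = twisted_g \<star> [:a:] - smult a g"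
    by (simp add: w_def skew_mult_diff_left)
  have "degree (w \<star> g) \<le> degree g"
    unfolding wg using degree_skew_mult_le[of twisted_g "[:a:]"]
    by (intro degree_diff_le) auto
  then have "degree w = 0"
    using factors_nonzero(2) by (cases "w = 0") (auto simp: degree_skew_mult)
  then obtain w0 where "w = [:w0:]"
    by (rule degree_eq_zeroE)
  with wg have twist: "twisted_g \<star> [:a:] = smult (a + w0) g"
    by (simp add: skew_mult_const_left smult_add_left)
  from arg_cong[OF twist, of "\<lambda>f. coeff f 0"]
  have "\<Theta> (int n) (coeff g 0) * a = (a + w0) * coeff g 0"
    by (simp add: coeff_skew_mult_const_right)
  then have "a + w0 = \<gamma>"
    using coeff_0_g_nonzero by (simp add: gamma_def funpow_theta_eq_theta_pow field_simps)
  with twist show ?thesis by simp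
qed

lemma twisted_g_eq: "twisted_g = smult \<gamma> (g \<star> [:inverse a:])"
proof -
  have "twisted_g = twisted_g \<star> [:a:] \<star> [:inverse a:]"
    using a_nonzero by (simp add: skew_mult_assoc skew_mult_const pCons_one)
  then show ?thesis
    by (simp add: twisted_g_mult_a smult_skew_mult)
qed

theorem swapped_factorization: "g \<star> [:inverse a:] \<star> h = [:inverse \<gamma>:] \<star> (monom 1 n - [:\<gamma>:])"
proof -
  have g_a: "g \<star> [:inverse a:] \<star> [:a:] = g"
    using a_nonzero by (simp add: skew_mult_assoc skew_mult_const pCons_one)
  have "g \<star> [:inverse a:] \<star> h \<star> g = g \<star> [:inverse a:] \<star> monom 1 n - g"
    by (simp add: skew_mult_assoc[of "g \<star> [:inverse a:]"] skew_mult_diff_right g_a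
        flip: factorization)
  also have "\<dots> = smult (inverse \<gamma>) (monom 1 n \<star> g) - g"
    using gamma_nonzero by (simp add: monom_skew_mult_commute twisted_g_eq smult_skew_mult)
  also have "\<dots> = [:inverse \<gamma>:] \<star> (monom 1 n - [:\<gamma>:]) \<star> g"
    using gamma_nonzero
    by (simp add: skew_mult_const_left smult_skew_mult skew_mult_diff_left smult_diff_right)
  finally show ?thesis
    using factors_nonzero(2) by (simp add: skew_mult_right_cancel)
qed

lemma twisted_g_mult_h: "twisted_g \<star> h = monom 1 n - [:\<gamma>:]"
  using gamma_nonzero
  by (simp add: twisted_g_eq smult_skew_mult swapped_factorization skew_mult_const_left)

lemma g_mult_untwisted_h: "g \<star> map_poly (\<Theta> (- int n)) h = monom 1 n - [:\<Theta> (- int n) \<gamma>:]"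
  using arg_cong[OF twisted_g_mult_h, of "map_poly (\<Theta> (- int n))"]
  by (simp add: map_theta_pow_skew_mult map_theta_pow_binomial)

theorem reflected_factorization_r_l:
  "- rho_r \<theta> twisted_g \<star> [:\<Theta> (int (degree h) - int n) (inverse \<gamma>):]
     \<star> rho_l \<theta> (map_poly (\<Theta> (- int n)) h) = monom 1 n - [:inverse a:]"
proof -
  let ?H = "map_poly (\<Theta> (- int n)) h" and ?X = "g \<star> [:inverse a:]"
  have exps: "int (degree g) + (int (degree h) - int n) = 0" "degree g + degree h = n"
    using degree_factors by auto
  have "rho_r \<theta> twisted_g \<star> [:\<Theta> (int (degree h) - int n) (inverse \<gamma>):]
      = reflect_r (degree g) ([:inverse \<gamma>:] \<star> twisted_g)"
    using reflect_r_skew_mult_reflect_l[of twisted_g "degree g" "[:_:]" 0]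
    by (simp add: rho_r_eq_reflect_r exps flip: theta_pow_add)
  also have "\<dots> = reflect_r (degree g) ?X"
    using gamma_nonzero by (simp add: twisted_g_eq skew_mult_const_left)
  finally have "- rho_r \<theta> twisted_g \<star> [:\<Theta> (int (degree h) - int n) (inverse \<gamma>):]
      \<star> rho_l \<theta> ?H = - (reflect_r (degree g) ?X \<star> reflect_l (degree h) ?H)"
    by (simp add: skew_mult_minus_left rho_l_eq_reflect_l)
  also have "\<dots> = - reflect_r n (h \<star> ?X)"
    using reflect_r_skew_mult_reflect_l[of ?X "degree g" ?H "degree h"]
      degree_skew_mult_le[of g "[:inverse a:]"]
    by (simp add: exps)
  also have "\<dots> = - reflect_r n (monom (\<Theta> (int n) (inverse a)) n - [:1:])"
    using a_nonzero
    by (simp add: skew_mult_diff_left monom_skew_mult_const skew_mult_const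
        flip: skew_mult_assoc factorization)
  also have "\<dots> = monom 1 n - [:inverse a:]"
    by (simp add: reflect_r_binomial)
  finally show ?thesis .
qed

lemma reflected_factors_l_a_r:
  "rho_l \<theta> (map_poly (\<Theta> (- int n)) h) \<star> [:a:] \<star> rho_r \<theta> twisted_g
   = [:\<Theta> (- int (degree g)) \<gamma>:]
     - monom (\<Theta> (int (degree h)) \<gamma> * \<Theta> (- int (degree g)) \<gamma>) n"
proof -
  let ?H = "map_poly (\<Theta> (- int n)) h"
  have exps: "int n = int (degree h) + int (degree g)" "degree h + degree g = n"
    using degree_factors by auto
  have "rho_l \<theta> ?H \<star> [:a:] = reflect_l (degree h) ([:a:] \<star> ?H)"
    using reflect_l_skew_mult_reflect_r[of ?H "degree h" "[:a:]" 0]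
    by (simp add: rho_l_eq_reflect_l)
  then have "rho_l \<theta> ?H \<star> [:a:] \<star> rho_r \<theta> twisted_g
      = reflect_l n (map_poly (\<Theta> (- int (degree g))) (twisted_g \<star> ([:a:] \<star> ?H)))"
    using reflect_l_skew_mult_reflect_r[of "[:a:] \<star> ?H" "degree h" twisted_g "degree g"]
      degree_skew_mult_le[of "[:a:]" ?H]
    by (simp add: rho_r_eq_reflect_r exps(2))
  also have "twisted_g \<star> ([:a:] \<star> ?H) = monom \<gamma> n - [:\<gamma> * \<Theta> (- int n) \<gamma>:]"
    by (simp add: twisted_g_mult_a smult_skew_mult g_mult_untwisted_h smult_diff_right smult_monom
        flip: skew_mult_assoc)
  finally show ?thesis
    by (simp add: map_theta_pow_binomial reflect_l_binomial theta_pow_times exps(1)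
        flip: theta_pow_add)
qed

theorem reflected_factorization_l_r:
  "[:- \<Theta> (int (degree h) - int n) (inverse \<gamma>) * \<Theta> (int (degree h)) (inverse \<gamma>):]
     \<star> rho_l \<theta> (map_poly (\<Theta> (- int n)) h) \<star> [:a:] \<star> rho_r \<theta> twisted_g
   = monom 1 n - [:\<Theta> (int (degree h)) (inverse \<gamma>):]"
proof -
  define b where
    "b = - \<Theta> (int (degree h) - int n) (inverse \<gamma>) * \<Theta> (int (degree h)) (inverse \<gamma>)"
  have "int n = int (degree h) + int (degree g)"
    using degree_factors by auto
  then have "b * \<Theta> (- int (degree g)) \<gamma> = - \<Theta> (int (degree h)) (inverse \<gamma>)"
    "b * (\<Theta> (int (degree h)) \<gamma> * \<Theta> (- int (degree g)) \<gamma>) = - 1"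
    using gamma_nonzero by (simp_all add: b_def theta_pow_inverse) (simp add: field_simps)
  then have "smult b (rho_l \<theta> (map_poly (\<Theta> (- int n)) h) \<star> [:a:] \<star> rho_r \<theta> twisted_g)
      = monom 1 n - [:\<Theta> (int (degree h)) (inverse \<gamma>):]"
    unfolding reflected_factors_l_a_r by (simp add: smult_diff_right smult_monom flip: minus_monom)
  then show ?thesis
    unfolding b_def [symmetric] by (simp add: skew_mult_const_left smult_skew_mult)
qed

end

theorem corollary4p4:
  fixes \<theta> :: "'a::{field,finite} \<Rightarrow> 'a" and a :: 'a and g h :: "'a poly" and n :: nat
  assumes aut: "field_aut \<theta>"
    and a0: "a \<noteq> 0"
    and n0: "0 < n"
    and fact: "monom 1 n - [:a:] = skew_mult \<theta> h g"
  defines "k \<equiv> degree h"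
    and "c \<equiv> gamma \<theta> n a g"
    and "hl \<equiv> rho_l \<theta> (map_poly (theta_pow \<theta> (- int n)) h)"
    and "gr \<equiv> rho_r \<theta> (map_poly (theta_pow \<theta> (int n)) g)"
  shows "skew_mult \<theta> (skew_mult \<theta> g [:inverse a:]) h
           = skew_mult \<theta> [:inverse c:] (monom 1 n - [:c:])
       \<and> skew_mult \<theta> (skew_mult \<theta> (skew_mult \<theta>
            [:- theta_pow \<theta> (int k - int n) (inverse c) * theta_pow \<theta> (int k) (inverse c):]
            hl) [:a:]) gr
           = monom 1 n - [:theta_pow \<theta> (int k) (inverse c):]
       \<and> skew_mult \<theta> (skew_mult \<theta> (- gr) [:theta_pow \<theta> (int k - int n) (inverse c):]) hl
           = monom 1 n - [:inverse a:]"
proof -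
  interpret skew_binomial_factorization \<theta> a g h n
    using aut a0 n0 fact
    by (simp add: skew_binomial_factorization_def skew_binomial_factorization_axioms_def
        skew_poly_ring_def)
  show ?thesis
    unfolding k_def c_def hl_def gr_def
    using swapped_factorization reflected_factorization_l_r reflected_factorization_r_l by blast
qed

end
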